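(* Let $\varepsilon>0$, $k>0$ and $0<\lambda\le 1$. Then $$\min\Big\{E_\varepsilon[H]:\ H\in H^1(0,\lambda),\ H\ge 0 \text{ a.e.},\ \int_0^\lambda H\,dy=1\Big\}$$ and $$\min\Big\{U_\varepsilon[h]:\ h\in H^2(0,\lambda),\ h'\ge 0\text{ a.e.},\ h(0)=0,\ h(\lambda)=1\Big\}$$ are attained by the homogeneous inverse deformation $h(y)=y/\lambda$, i.e. by the constant inverse stretch $H\equiv 1/\lambda$. The corresponding minimum values are $E_\varepsilon[1/\lambda]=U_\varepsilon[y/\lambda]=\lambda W^*(1/\lambda)=W(\lambda)$.
   Context: Standing assumptions: $W:(0,\infty)\to[0,\infty)$ is continuously differentiable, convex on $(0,1)$, has a single isolated potential well at $F=1$ with $W(1)=0$ (so $W>0$ for $F\neq1$), has a single inflection point at some $F>1$, and has a horizontal asymptote as $F\to+\infty$ (example: $W(F)=(1-F^{-1})^2$). The inverse stored energy is $W^*(H):=H\,W(1/H)$ for $H>0$, extended by $W^*(0):=0$ (its limit as $H\searrow0$); thus $W^*\ge0$ on $[0,\infty)$ with $W^*(0)=W^*(1)=0$ and $W^*>0$ otherwise. For $\varepsilon>0$, $$E_\varepsilon[H]=\int_0^\lambda\Big(\tfrac{\varepsilon^2}{2}(H')^2+W^*(H)\Big)dy,$$ $$U_\varepsilon[h]=\int_0^\lambda\Big(\tfrac{\varepsilon^2}{2}(h'')^2+W^*(h')+\tfrac{k\,h'}{2}(y-\lambda h)^2\Big)dy,$$ where $k>0$ is a constant. *)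

theory Defs
  imports "HOL-Analysis.Analysis"
begin

definition Wstar :: "(real \<Rightarrow> real) \<Rightarrow> real \<Rightarrow> real" where
  "Wstar W H = (if H = 0 then 0 else H * W (1 / H))"

definition admissible_W :: "(real \<Rightarrow> real) \<Rightarrow> bool" where
  "admissible_W W \<longleftrightarrow>
     (\<forall>F>0. W F \<ge> 0) \<and>
     (\<exists>W'. continuous_on {0<..} W' \<and> (\<forall>F>0. (W has_real_derivative W' F) (at F))) \<and>
     convex_on {0<..<1} W \<and>
     W 1 = 0 \<and> (\<forall>F>0. F \<noteq> 1 \<longrightarrow> W F > 0) \<and>
     (\<exists>F0>1. convex_on {0<..F0} W \<and> concave_on {F0..} W) \<and>
     (\<exists>L. (W \<longlongrightarrow> L) at_top)"

text \<open>u belongs to H^1(0,lam) with weak derivative du: du is square integrable and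
  u is (the continuous representative) u(y) = u(0) + int_0^y du.\<close>
definition H1_with_deriv :: "real \<Rightarrow> (real \<Rightarrow> real) \<Rightarrow> (real \<Rightarrow> real) \<Rightarrow> bool" where
  "H1_with_deriv lam u du \<longleftrightarrow>
     set_integrable lborel {0..lam} du \<and>
     set_integrable lborel {0..lam} (\<lambda>y. (du y)\<^sup>2) \<and>
     (\<forall>y\<in>{0..lam}. u y = u 0 + (LBINT t:{0..y}. du t))"

definition E_energy :: "(real \<Rightarrow> real) \<Rightarrow> real \<Rightarrow> real \<Rightarrow> (real \<Rightarrow> real) \<Rightarrow> (real \<Rightarrow> real) \<Rightarrow> real" where
  "E_energy W eps lam H dH =
     (LBINT y:{0..lam}. eps\<^sup>2 / 2 * (dH y)\<^sup>2 + Wstar W (H y))"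

definition U_energy :: "(real \<Rightarrow> real) \<Rightarrow> real \<Rightarrow> real \<Rightarrow> real \<Rightarrow>
    (real \<Rightarrow> real) \<Rightarrow> (real \<Rightarrow> real) \<Rightarrow> (real \<Rightarrow> real) \<Rightarrow> real" where
  "U_energy W eps k lam h dh ddh =
     (LBINT y:{0..lam}. eps\<^sup>2 / 2 * (ddh y)\<^sup>2 + Wstar W (dh y)
                        + k * dh y / 2 * (y - lam * h y)\<^sup>2)"

end

theory Submission
  imports Defs
begin

text \<open>A nonnegative inverse stretch with integral 1 over [0, lam] has mean value 1/lam, so by
  Jensen's inequality the stored-energy term is at least lam * Wstar(1/lam) = W(lam); the gradient
  and elastic-foundation terms are nonnegative and vanish for the homogeneous deformation y/lam.
  Wstar itself is not convex, but for lam \<le> 1 it has a supporting line at 1/lam: the tangent of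
  the convex branch of W at lam, rescaled by the perspective x * W(1/x), bounds Wstar from below on
  [1, \<infinity>), and that line is nondecreasing and nonpositive at x = 1, where Wstar \<ge> 0 takes over.\<close>

lemma Wstar_eq: "Wstar W x = x * W (1 / x)"
  by (simp add: Wstar_def)

lemma Wstar_nonneg:
  assumes "admissible_W W" and "0 \<le> x"
  shows "0 \<le> Wstar W x"
  using assms unfolding admissible_W_def Wstar_def by auto

lemma admissible_W_continuous_on:
  assumes "admissible_W W"
  shows "continuous_on {0<..} W"
proof -
  obtain W' where "\<And>F. F > 0 \<Longrightarrow> (W has_real_derivative W' F) (at F)"
    using assms unfolding admissible_W_def by blast
  then show ?thesis
    by (meson DERIV_isCont continuous_at_imp_continuous_on greaterThan_iff)
qed

lemma continuous_on_Wstar: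
  assumes W: "continuous_on {0<..} W" and L: "(W \<longlongrightarrow> L) at_top"
  shows "continuous_on {0..} (Wstar W)"
proof -
  have "continuous (at x within {0..}) (\<lambda>x. x * W (1 / x))" if "x \<ge> 0" for x :: real
  proof (cases "x = 0")
    case True
    have "((\<lambda>x. W (inverse x)) \<longlongrightarrow> L) (at_right 0)"
      using filterlim_compose[OF L filterlim_inverse_at_top_right] .
    then have "((\<lambda>x::real. x * W (1 / x)) \<longlongrightarrow> 0 * L) (at_right 0)"
      by (intro tendsto_mult) (simp_all add: inverse_eq_divide tendsto_ident_at)
    then show ?thesis
      using True by (simp add: continuous_within at_within_Ici_at_right)
  next
    case False
    with that have "isCont W (1 / x)"
      using W by (simp add: continuous_on_eq_continuous_at)
    then have "isCont (\<lambda>x. x * W (1 / x)) x"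
      using False by (intro continuous_intros) (auto intro: continuous_at_compose[of _ "\<lambda>x. 1/x", unfolded o_def])
    then show ?thesis
      by (simp add: continuous_at_imp_continuous_within)
  qed
  then show ?thesis
    unfolding Wstar_eq[abs_def] by (simp add: continuous_on_eq_continuous_within)
qed

lemma convex_on_above_tangent_right_endpoint:
  fixes f :: "real \<Rightarrow> real"
  assumes cvx: "convex_on {a<..<b} f" and cont: "isCont f b"
    and c: "c \<in> {a<..<b}" and deriv: "(f has_real_derivative f') (at c)"
    and x: "x \<in> {a<..b}"
  shows "f' * (x - c) \<le> f x - f c"
proof -
  have tangent: "f' * (u - c) \<le> f u - f c" if "u \<in> {a<..<b}" for u
    using convex_on_imp_above_tangent[OF cvx _ _ that, of c f'] c deriv
    by (auto simp: has_field_derivative_at_within interior_open)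
  show ?thesis
  proof (cases "x = b")
    case True
    have "((\<lambda>u. f u - f c - f' * (u - c)) \<longlongrightarrow> f b - f c - f' * (b - c)) (at_left b)"
      using cont by (intro tendsto_intros) (auto simp: isCont_def filterlim_at_split)
    moreover have "eventually (\<lambda>u. 0 \<le> f u - f c - f' * (u - c)) (at_left b)"
      using eventually_at_left_real[of a b] c tangent by (auto elim!: eventually_mono)
    ultimately have "0 \<le> f b - f c - f' * (b - c)"
      by (rule tendsto_lowerbound) simp
    then show ?thesis using True by simp
  qed (use x tangent in auto)
qed

lemma Wstar_supporting_line:
  assumes W: "admissible_W W" and lam: "0 < lam" "lam \<le> 1"
  obtains s where "\<And>x. 0 \<le> x \<Longrightarrow> Wstar W (1 / lam) + s * (x - 1 / lam) \<le> Wstar W x"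
proof (cases "lam = 1")
  case True
  then show ?thesis
    using that[of 0] W Wstar_nonneg by (auto simp: Wstar_def admissible_W_def)
next
  case False
  obtain W' where W': "\<And>F. F > 0 \<Longrightarrow> (W has_real_derivative W' F) (at F)"
    using W unfolding admissible_W_def by blast
  have W1: "W 1 = 0" and Wlam: "0 < W lam"
    using W lam False unfolding admissible_W_def by auto
  have tangent: "W' lam * (u - lam) \<le> W u - W lam" if "u \<in> {0<..1}" for u
  proof (rule convex_on_above_tangent_right_endpoint[OF _ _ _ W'[OF lam(1)] that])
    show "convex_on {0<..<1} W" using W unfolding admissible_W_def by blast
    show "isCont W 1" using W'[of 1] by (simp add: DERIV_isCont)
  qed (use lam False in auto)
  define s where "s = W lam - W' lam * lam"
  have "W' lam * (1 - lam) < 0"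
    using tangent[of 1] W1 Wlam by simp
  then have "W' lam * lam < 0"
    using lam by (simp add: mult_less_0_iff)
  then have "0 \<le> s"
    using Wlam by (simp add: s_def)
  have line_at_1: "Wstar W (1 / lam) + s * (1 - 1 / lam) = W lam + W' lam * (1 - lam)"
    using lam by (simp add: Wstar_def s_def field_simps)
  show ?thesis
  proof (rule that)
    fix x :: real assume "0 \<le> x"
    show "Wstar W (1 / lam) + s * (x - 1 / lam) \<le> Wstar W x"
    proof (cases "x < 1")
      case True
      then have "s * (x - 1 / lam) \<le> s * (1 - 1 / lam)"
        using \<open>0 \<le> s\<close> by (simp add: mult_left_mono)
      then show ?thesis
        using line_at_1 tangent[of 1] W1 Wstar_nonneg[OF W \<open>0 \<le> x\<close>] by simp
    next
      case False
      have "x * (W lam + W' lam * (1 / x - lam)) \<le> x * W (1 / x)"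
        using tangent[of "1 / x"] False by (intro mult_left_mono) auto
      moreover have "x * (W lam + W' lam * (1 / x - lam)) = Wstar W (1 / lam) + s * (x - 1 / lam)"
        using lam False by (simp add: Wstar_def s_def field_simps)
      ultimately show ?thesis
        by (simp add: Wstar_eq)
    qed
  qed
qed

lemma LBINT_Icc_const:
  assumes "0 \<le> a"
  shows "(LBINT y:{0..a}. (c::real)) = a * c"
  using assms by (simp add: set_integral_const)

lemma H1_with_deriv_continuous_on:
  assumes "H1_with_deriv lam u du"
  shows "continuous_on {0..lam} u"
proof -
  have du: "set_integrable lborel {0..lam} du"
    using assms unfolding H1_with_deriv_def by blast
  have "u y = u 0 + integral {0..y} du" if "y \<in> {0..lam}" for y
  proof -
    have "set_integrable lborel {0..y} du"
      using set_integrable_subset[OF du] that by auto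
    then have "(LBINT t:{0..y}. du t) = integral {0..y} du"
      by (rule set_borel_integral_eq_integral(2))
    then show ?thesis
      using assms that unfolding H1_with_deriv_def by metis
  qed
  moreover have "continuous_on {0..lam} (\<lambda>y. u 0 + integral {0..y} du)"
    using set_borel_integral_eq_integral(1)[OF du]
    by (intro continuous_intros indefinite_integral_continuous_1)
  ultimately show ?thesis
    by (metis (no_types, lifting) continuous_on_eq)
qed

lemma continuous_on_AE_nonneg_imp_nonneg:
  fixes f :: "real \<Rightarrow> real"
  assumes f: "continuous_on {a..b} f" and "a < b"
    and ae: "AE y in lborel. y \<in> {a..b} \<longrightarrow> 0 \<le> f y"
    and y: "y \<in> {a..b}"
  shows "0 \<le> f y"
proof (rule ccontr)
  assume "\<not> 0 \<le> f y"
  then obtain d where "0 < d" and d: "\<forall>x\<in>{a..b}. dist x y < d \<longrightarrow> dist (f x) (f y) < - f y"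
    using f y unfolding continuous_on_iff by (metis neg_0_less_iff_less not_le)
  define a' b' where "a' = max a (y - d / 2)" and "b' = min b (y + d / 2)"
  have "a' < b'"
    using y \<open>a < b\<close> \<open>0 < d\<close> by (auto simp: a'_def b'_def)
  have neg: "x \<in> {a..b} \<and> f x < 0" if "x \<in> {a'..b'}" for x
  proof -
    have "x \<in> {a..b}" and "dist x y < d"
      using that \<open>0 < d\<close> by (auto simp: a'_def b'_def dist_real_def)
    then show ?thesis
      using d by (auto simp: dist_real_def)
  qed
  have "AE x in lborel. x \<notin> {a'..b'}"
    using ae by (rule eventually_mono) (use neg in force)
  then have "emeasure lborel {a'..b'} = 0"
    by (subst (asm) AE_iff_measurable[of "{a'..b'}"]) auto
  then show False
    using \<open>a' < b'\<close> by simp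
qed

lemma continuous_on_Wstar_comp:
  assumes W: "admissible_W W" and H: "continuous_on S H" and "\<And>y. y \<in> S \<Longrightarrow> 0 \<le> H y"
  shows "continuous_on S (\<lambda>y. Wstar W (H y))"
proof -
  obtain L where "(W \<longlongrightarrow> L) at_top"
    using W unfolding admissible_W_def by blast
  then have "continuous_on {0..} (Wstar W)"
    using continuous_on_Wstar admissible_W_continuous_on[OF W] by blast
  then show ?thesis
    using continuous_on_compose2[OF _ H] assms(3) by force
qed

lemma Wstar_integral_lower_bound:
  assumes W: "admissible_W W" and lam: "0 < lam" "lam \<le> 1"
    and H: "continuous_on {0..lam} H" and H_nonneg: "\<And>y. y \<in> {0..lam} \<Longrightarrow> 0 \<le> H y"
    and H_mass: "(LBINT y:{0..lam}. H y) = 1"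
  shows "lam * Wstar W (1 / lam) \<le> (LBINT y:{0..lam}. Wstar W (H y))"
proof -
  obtain s where s: "\<And>x. 0 \<le> x \<Longrightarrow> Wstar W (1 / lam) + s * (x - 1 / lam) \<le> Wstar W x"
    using Wstar_supporting_line[OF W lam] by blast
  have H_int: "set_integrable lborel {0..lam} H"
    using H by (rule borel_integrable_atLeastAtMost')
  have "(LBINT y:{0..lam}. (Wstar W (1 / lam) - s / lam) + s * H y)
        = lam * (Wstar W (1 / lam) - s / lam) + s * (LBINT y:{0..lam}. H y)"
    using lam H_int
    by (subst set_integral_add(2)) (auto simp: set_integral_const intro: borel_integrable_atLeastAtMost')
  then have "lam * Wstar W (1 / lam) = (LBINT y:{0..lam}. (Wstar W (1 / lam) - s / lam) + s * H y)"
    using lam H_mass by (simp add: field_simps)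
  also have "\<dots> \<le> (LBINT y:{0..lam}. Wstar W (H y))"
  proof (rule set_integral_mono)
    show "set_integrable lborel {0..lam} (\<lambda>y. (Wstar W (1 / lam) - s / lam) + s * H y)"
      using H by (intro borel_integrable_atLeastAtMost' continuous_intros)
    show "set_integrable lborel {0..lam} (\<lambda>y. Wstar W (H y))"
      using continuous_on_Wstar_comp[OF W H H_nonneg] by (rule borel_integrable_atLeastAtMost')
    show "Wstar W (1 / lam) - s / lam + s * H y \<le> Wstar W (H y)" if "y \<in> {0..lam}" for y
      using s[OF H_nonneg[OF that]] by (simp add: algebra_simps)
  qed
  finally show ?thesis .
qed

lemma H1_with_deriv_const: "H1_with_deriv lam (\<lambda>y. c) (\<lambda>y. 0)"
  unfolding H1_with_deriv_def by (simp add: set_integrable_def)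

lemma H1_with_deriv_linear: "H1_with_deriv lam (\<lambda>y. y / a) (\<lambda>y. 1 / a)"
  unfolding H1_with_deriv_def
  by (auto intro!: borel_integrable_atLeastAtMost' simp: LBINT_Icc_const)

lemma E_energy_const:
  assumes "0 \<le> lam"
  shows "E_energy W eps lam (\<lambda>y. c) (\<lambda>y. 0) = lam * Wstar W c"
  using assms unfolding E_energy_def by (simp add: LBINT_Icc_const)

lemma U_energy_linear:
  assumes "0 < lam"
  shows "U_energy W eps k lam (\<lambda>y. y / lam) (\<lambda>y. 1 / lam) (\<lambda>y. 0) = lam * Wstar W (1 / lam)"
  using assms unfolding U_energy_def by (simp add: LBINT_Icc_const)

lemma E_energy_homogeneous_le:
  assumes W: "admissible_W W" and lam: "0 < lam" "lam \<le> 1"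
    and H: "H1_with_deriv lam H dH"
    and H_nonneg: "AE y in lborel. y \<in> {0..lam} \<longrightarrow> 0 \<le> H y"
    and H_mass: "(LBINT y:{0..lam}. H y) = 1"
  shows "E_energy W eps lam (\<lambda>y. 1 / lam) (\<lambda>y. 0) \<le> E_energy W eps lam H dH"
proof -
  have H_cont: "continuous_on {0..lam} H"
    using H by (rule H1_with_deriv_continuous_on)
  have H_nonneg': "\<And>y. y \<in> {0..lam} \<Longrightarrow> 0 \<le> H y"
    using continuous_on_AE_nonneg_imp_nonneg[OF H_cont lam(1) H_nonneg] .
  have WH_int: "set_integrable lborel {0..lam} (\<lambda>y. Wstar W (H y))"
    using continuous_on_Wstar_comp[OF W H_cont H_nonneg'] by (rule borel_integrable_atLeastAtMost')
  have dH_int: "set_integrable lborel {0..lam} (\<lambda>y. (dH y)\<^sup>2)"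
    using H unfolding H1_with_deriv_def by blast
  have "E_energy W eps lam (\<lambda>y. 1 / lam) (\<lambda>y. 0) = lam * Wstar W (1 / lam)"
    using lam by (simp add: E_energy_const)
  also have "\<dots> \<le> (LBINT y:{0..lam}. Wstar W (H y))"
    using Wstar_integral_lower_bound[OF W lam H_cont H_nonneg' H_mass] .
  also have "\<dots> \<le> E_energy W eps lam H dH"
    unfolding E_energy_def
  proof (rule set_integral_mono[OF WH_int])
    show "set_integrable lborel {0..lam} (\<lambda>y. eps\<^sup>2 / 2 * (dH y)\<^sup>2 + Wstar W (H y))"
      using dH_int WH_int by (intro set_integral_add(1) set_integrable_mult_right)
  qed simp
  finally show ?thesis .
qed

lemma U_energy_linear_le:
  assumes W: "admissible_W W" and lam: "0 < lam" "lam \<le> 1" and "0 \<le> k"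
    and h: "H1_with_deriv lam h dh" and dh: "H1_with_deriv lam dh ddh"
    and dh_nonneg: "AE y in lborel. y \<in> {0..lam} \<longrightarrow> 0 \<le> dh y"
    and "h 0 = 0" and "h lam = 1"
  shows "U_energy W eps k lam (\<lambda>y. y / lam) (\<lambda>y. 1 / lam) (\<lambda>y. 0) \<le> U_energy W eps k lam h dh ddh"
proof -
  have h_cont: "continuous_on {0..lam} h"
    using h by (rule H1_with_deriv_continuous_on)
  have dh_cont: "continuous_on {0..lam} dh"
    using dh by (rule H1_with_deriv_continuous_on)
  have dh_nonneg': "\<And>y. y \<in> {0..lam} \<Longrightarrow> 0 \<le> dh y"
    using continuous_on_AE_nonneg_imp_nonneg[OF dh_cont lam(1) dh_nonneg] .
  have "h lam = h 0 + (LBINT y:{0..lam}. dh y)"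
    using h lam unfolding H1_with_deriv_def by (meson atLeastAtMost_iff less_imp_le order_refl)
  then have dh_mass: "(LBINT y:{0..lam}. dh y) = 1"
    using \<open>h 0 = 0\<close> \<open>h lam = 1\<close> by simp
  have rest_int: "set_integrable lborel {0..lam} (\<lambda>y. Wstar W (dh y) + k * dh y / 2 * (y - lam * h y)\<^sup>2)"
    using continuous_on_Wstar_comp[OF W dh_cont dh_nonneg'] h_cont dh_cont
    by (intro borel_integrable_atLeastAtMost' continuous_intros) auto
  have WH_int: "set_integrable lborel {0..lam} (\<lambda>y. Wstar W (dh y))"
    using continuous_on_Wstar_comp[OF W dh_cont dh_nonneg'] by (rule borel_integrable_atLeastAtMost')
  have ddh_int: "set_integrable lborel {0..lam} (\<lambda>y. (ddh y)\<^sup>2)"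
    using dh unfolding H1_with_deriv_def by blast
  have "U_energy W eps k lam (\<lambda>y. y / lam) (\<lambda>y. 1 / lam) (\<lambda>y. 0) = lam * Wstar W (1 / lam)"
    using lam by (simp add: U_energy_linear)
  also have "\<dots> \<le> (LBINT y:{0..lam}. Wstar W (dh y))"
    using Wstar_integral_lower_bound[OF W lam dh_cont dh_nonneg' dh_mass] .
  also have "\<dots> \<le> U_energy W eps k lam h dh ddh"
    unfolding U_energy_def add.assoc
  proof (rule set_integral_mono[OF WH_int])
    show "set_integrable lborel {0..lam}
        (\<lambda>y. eps\<^sup>2 / 2 * (ddh y)\<^sup>2 + (Wstar W (dh y) + k * dh y / 2 * (y - lam * h y)\<^sup>2))"
      using set_integral_add(1)[OF set_integrable_mult_right[OF ddh_int] rest_int] .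
    show "Wstar W (dh y) \<le> eps\<^sup>2 / 2 * (ddh y)\<^sup>2 + (Wstar W (dh y) + k * dh y / 2 * (y - lam * h y)\<^sup>2)"
      if "y \<in> {0..lam}" for y
      using dh_nonneg'[OF that] \<open>0 \<le> k\<close> by simp
  qed
  finally show ?thesis .
qed

theorem proposition1:
  fixes W :: "real \<Rightarrow> real" and eps k lam :: real
  assumes W: "admissible_W W"
    and eps: "eps > 0" and k: "k > 0" and lam: "0 < lam" "lam \<le> 1"
  shows
    "H1_with_deriv lam (\<lambda>y. 1 / lam) (\<lambda>y. 0)
     \<and> (\<forall>H dH. H1_with_deriv lam H dH
           \<and> (AE y in lborel. y \<in> {0..lam} \<longrightarrow> H y \<ge> 0)
           \<and> (LBINT y:{0..lam}. H y) = 1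
         \<longrightarrow> E_energy W eps lam (\<lambda>y. 1 / lam) (\<lambda>y. 0) \<le> E_energy W eps lam H dH)
     \<and> H1_with_deriv lam (\<lambda>y. y / lam) (\<lambda>y. 1 / lam)
     \<and> H1_with_deriv lam (\<lambda>y. 1 / lam) (\<lambda>y. 0)
     \<and> (\<forall>h dh ddh. H1_with_deriv lam h dh \<and> H1_with_deriv lam dh ddh
           \<and> (AE y in lborel. y \<in> {0..lam} \<longrightarrow> dh y \<ge> 0)
           \<and> h 0 = 0 \<and> h lam = 1
         \<longrightarrow> U_energy W eps k lam (\<lambda>y. y / lam) (\<lambda>y. 1 / lam) (\<lambda>y. 0)
               \<le> U_energy W eps k lam h dh ddh)
     \<and> E_energy W eps lam (\<lambda>y. 1 / lam) (\<lambda>y. 0) = lam * Wstar W (1 / lam)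
     \<and> U_energy W eps k lam (\<lambda>y. y / lam) (\<lambda>y. 1 / lam) (\<lambda>y. 0) = lam * Wstar W (1 / lam)
     \<and> lam * Wstar W (1 / lam) = W lam"
proof -
  have "lam * Wstar W (1 / lam) = W lam"
    using lam by (simp add: Wstar_def)
  moreover have "0 \<le> k"
    using k by simp
  ultimately show ?thesis
    using E_energy_homogeneous_le[OF W lam] U_energy_linear_le[OF W lam] lam
    by (auto simp: H1_with_deriv_const H1_with_deriv_linear E_energy_const U_energy_linear)
qed

end
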